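(* Let $n\ge 2$, let $G$ and $H$ be non-trivial groups, let $\sigma\colon G\to S_n$ be a surjective homomorphism, and let $W=H\wr_\sigma G=H^n\rtimes_\sigma G$. Then \[ Z(W)=\Delta(Z(H))\times\bigl(Z(G)\cap\ker\sigma\bigr), \] where $\Delta(Z(H))=\{((a,\dots,a),1): a\in Z(H)\}$ and $Z(G)\cap\ker\sigma$ is identified with $\{(\mathbf 1,g): g\in Z(G)\cap\ker\sigma\}$. In particular, if $Z(G)\subseteq\ker\sigma$, then $Z(W)=\Delta(Z(H))\times Z(G)$.
   Context: For $n\ge2$, groups $G,H$ and a homomorphism $\sigma\colon G\to S_n$, the permutational wreath pullback $H\wr_\sigma G=H^n\rtimes_\sigma G$ is the semidirect product in which $G$ acts on $H^n$ by permuting coordinates through $\sigma$: $g\cdot(h_1,\dots,h_n)=(h_{\sigma(g)(1)},\dots,h_{\sigma(g)(n)})$ (with the composition convention in $S_n$ making this a left action). Elements are pairs $(\mathbf h,g)$ with $\mathbf h\in H^n$, $g\in G$, and $(\mathbf h,g)(\mathbf k,x)=(\mathbf h\cdot g\mathbf k,\,gx)$. The diagonal map is $\Delta\colon H\to H^n$, $\Delta(h)=(h,\dots,h)$. *)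

theory Defs
  imports "HOL-Algebra.Algebra"
begin

definition group_center :: "('a, 'm) monoid_scheme \<Rightarrow> 'a set" where
  "group_center G = {z \<in> carrier G. \<forall>x \<in> carrier G. z \<otimes>\<^bsub>G\<^esub> x = x \<otimes>\<^bsub>G\<^esub> z}"

text \<open>The symmetric group S_n on {1..n}, with the composition convention
  "apply the left factor first" (p * q = q o p), which makes the coordinate
  permutation below a left action.\<close>
definition Sn :: "nat \<Rightarrow> (nat \<Rightarrow> nat) monoid" where
  "Sn n = \<lparr> partial_object.carrier = {p. p permutes {1..n}}, monoid.mult = (\<lambda>p q. q \<circ> p), monoid.one = id \<rparr>"

text \<open>Permutational wreath product H wr_sigma G = H^n semidirect G; tuples in H^n are
  extensional functions on {1..n}; g acts by (g . k) i = k (sigma g i).\<close>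
definition wreath :: "('h, 'x) monoid_scheme \<Rightarrow> ('g, 'y) monoid_scheme \<Rightarrow> nat
    \<Rightarrow> ('g \<Rightarrow> nat \<Rightarrow> nat) \<Rightarrow> ((nat \<Rightarrow> 'h) \<times> 'g) monoid" where
  "wreath H G n \<sigma> = \<lparr> partial_object.carrier = ({1..n} \<rightarrow>\<^sub>E carrier H) \<times> carrier G,
     monoid.mult = (\<lambda>(h, g) (k, x). ((\<lambda>i\<in>{1..n}. h i \<otimes>\<^bsub>H\<^esub> k (\<sigma> g i)), g \<otimes>\<^bsub>G\<^esub> x)),
     monoid.one = ((\<lambda>i\<in>{1..n}. \<one>\<^bsub>H\<^esub>), \<one>\<^bsub>G\<^esub>) \<rparr>"

definition diag_emb :: "('h, 'x) monoid_scheme \<Rightarrow> ('g, 'y) monoid_scheme \<Rightarrow> nat \<Rightarrow> 'h \<Rightarrow> (nat \<Rightarrow> 'h) \<times> 'g" where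
  "diag_emb H G n a = ((\<lambda>i\<in>{1..n}. a), \<one>\<^bsub>G\<^esub>)"

definition top_emb :: "('h, 'x) monoid_scheme \<Rightarrow> nat \<Rightarrow> 'g \<Rightarrow> (nat \<Rightarrow> 'h) \<times> 'g" where
  "top_emb H n g = ((\<lambda>i\<in>{1..n}. \<one>\<^bsub>H\<^esub>), g)"

end

theory Submission
  imports Defs
begin

text \<open>A central element (h, g) commutes with every base element (k, 1) and every complement
  element (1, x). Taking k supported on the single coordinate \<sigma> g i forces \<sigma> g = id; this is
  where H must be non-trivial. Constant k makes every h i central in H, and (1, x) yields
  g \<in> Z(G) together with h \<circ> \<sigma> x = h, so h is constant once \<sigma> is onto S_n (transpositions
  suffice). The converse inclusion is a direct computation.\<close>

lemma wreath_mult [simp]: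
  "(h, g) \<otimes>\<^bsub>wreath H G n \<sigma>\<^esub> (k, x) = ((\<lambda>i\<in>{1..n}. h i \<otimes>\<^bsub>H\<^esub> k (\<sigma> g i)), g \<otimes>\<^bsub>G\<^esub> x)"
  by (simp add: wreath_def)

lemma wreath_carrier [simp]:
  "carrier (wreath H G n \<sigma>) = ({1..n} \<rightarrow>\<^sub>E carrier H) \<times> carrier G"
  by (simp add: wreath_def)

lemma kernel_Sn: "kernel G (Sn n) \<sigma> = {x \<in> carrier G. \<sigma> x = id}"
  by (simp add: kernel_def Sn_def)

locale wreath_product = G: group G + H: group H
  for G :: "('g, 'y) monoid_scheme" and H :: "('h, 'x) monoid_scheme" +
  fixes n :: nat and \<sigma> :: "'g \<Rightarrow> nat \<Rightarrow> nat"
  assumes hom_Sn: "\<sigma> \<in> hom G (Sn n)"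
begin

abbreviation W where "W \<equiv> wreath H G n \<sigma>"

lemma sigma_permutes: "x \<in> carrier G \<Longrightarrow> \<sigma> x permutes {1..n}"
  using hom_Sn by (auto simp: hom_def Sn_def)

lemma sigma_in: "x \<in> carrier G \<Longrightarrow> i \<in> {1..n} \<Longrightarrow> \<sigma> x i \<in> {1..n}"
  using permutes_in_image[OF sigma_permutes] by simp

lemma sigma_mult: "x \<in> carrier G \<Longrightarrow> y \<in> carrier G \<Longrightarrow> \<sigma> (x \<otimes>\<^bsub>G\<^esub> y) = \<sigma> y \<circ> \<sigma> x"
  using hom_Sn by (auto simp: hom_def Sn_def)

lemma sigma_one: "\<sigma> \<one>\<^bsub>G\<^esub> = id"
proof
  fix i
  have "\<sigma> \<one>\<^bsub>G\<^esub> = \<sigma> \<one>\<^bsub>G\<^esub> \<circ> \<sigma> \<one>\<^bsub>G\<^esub>"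
    using sigma_mult[of "\<one>\<^bsub>G\<^esub>" "\<one>\<^bsub>G\<^esub>"] by simp
  then have "\<sigma> \<one>\<^bsub>G\<^esub> (\<sigma> \<one>\<^bsub>G\<^esub> i) = \<sigma> \<one>\<^bsub>G\<^esub> i"
    by (metis comp_apply)
  then show "\<sigma> \<one>\<^bsub>G\<^esub> i = id i"
    using permutes_inj[OF sigma_permutes[OF G.one_closed]] by (simp add: inj_eq)
qed

lemma diag_emb_mult_top_emb:
  assumes "a \<in> carrier H" "g \<in> carrier G"
  shows "diag_emb H G n a \<otimes>\<^bsub>W\<^esub> top_emb H n g = ((\<lambda>i\<in>{1..n}. a), g)"
  using assms by (auto simp: diag_emb_def top_emb_def sigma_one intro!: restrict_ext)

lemma center_carrier:
  assumes "(h, g) \<in> group_center W"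
  shows "h \<in> {1..n} \<rightarrow>\<^sub>E carrier H" and "g \<in> carrier G"
  using assms by (auto simp: group_center_def)

lemma center_commute:
  assumes "(h, g) \<in> group_center W" "k \<in> {1..n} \<rightarrow>\<^sub>E carrier H" "x \<in> carrier G"
  shows "\<And>i. i \<in> {1..n} \<Longrightarrow> h i \<otimes>\<^bsub>H\<^esub> k (\<sigma> g i) = k i \<otimes>\<^bsub>H\<^esub> h (\<sigma> x i)"
    and "g \<otimes>\<^bsub>G\<^esub> x = x \<otimes>\<^bsub>G\<^esub> g"
proof -
  have "(h, g) \<otimes>\<^bsub>W\<^esub> (k, x) = (k, x) \<otimes>\<^bsub>W\<^esub> (h, g)"
    using assms by (auto simp: group_center_def)
  then have base: "(\<lambda>i\<in>{1..n}. h i \<otimes>\<^bsub>H\<^esub> k (\<sigma> g i)) = (\<lambda>i\<in>{1..n}. k i \<otimes>\<^bsub>H\<^esub> h (\<sigma> x i))"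
    and top: "g \<otimes>\<^bsub>G\<^esub> x = x \<otimes>\<^bsub>G\<^esub> g"
    by simp_all
  show "g \<otimes>\<^bsub>G\<^esub> x = x \<otimes>\<^bsub>G\<^esub> g" by (fact top)
  show "h i \<otimes>\<^bsub>H\<^esub> k (\<sigma> g i) = k i \<otimes>\<^bsub>H\<^esub> h (\<sigma> x i)" if "i \<in> {1..n}" for i
    using fun_cong[OF base, of i] that by simp
qed

lemma center_top_in_kernel:
  assumes "(h, g) \<in> group_center W" and nontrivial: "carrier H \<noteq> {\<one>\<^bsub>H\<^esub>}"
  shows "\<sigma> g = id"
proof
  fix i
  have g: "g \<in> carrier G" and h: "h \<in> {1..n} \<rightarrow>\<^sub>E carrier H"
    using center_carrier[OF assms(1)] by auto
  show "\<sigma> g i = id i"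
  proof (cases "i \<in> {1..n}")
    case False
    then show ?thesis using sigma_permutes[OF g] by (simp add: permutes_def)
  next
    case i: True
    obtain a where a: "a \<in> carrier H" "a \<noteq> \<one>\<^bsub>H\<^esub>" using nontrivial H.one_closed by blast
    define k where "k = (\<lambda>t\<in>{1..n}. if t = \<sigma> g i then a else \<one>\<^bsub>H\<^esub>)"
    have "k \<in> {1..n} \<rightarrow>\<^sub>E carrier H" using a by (auto simp: k_def)
    from center_commute(1)[OF assms(1) this G.one_closed i]
    have "h i \<otimes>\<^bsub>H\<^esub> k (\<sigma> g i) = k i \<otimes>\<^bsub>H\<^esub> h i" by (simp add: sigma_one)
    moreover have "k (\<sigma> g i) = a" using sigma_in[OF g i] by (simp add: k_def)
    moreover have hi: "h i \<in> carrier H" using h i by auto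
    ultimately have comm: "h i \<otimes>\<^bsub>H\<^esub> a = k i \<otimes>\<^bsub>H\<^esub> h i" by simp
    show ?thesis
    proof (rule ccontr)
      assume "\<sigma> g i \<noteq> id i"
      then have "k i = \<one>\<^bsub>H\<^esub>" using i by (simp add: k_def)
      with comm hi have "h i \<otimes>\<^bsub>H\<^esub> a = h i \<otimes>\<^bsub>H\<^esub> \<one>\<^bsub>H\<^esub>" by simp
      then show False using a H.l_cancel[OF _ a(1) H.one_closed hi] by simp
    qed
  qed
qed

lemma center_base_central:
  assumes "(h, g) \<in> group_center W" "i \<in> {1..n}"
  shows "h i \<in> group_center H"
proof -
  have h: "h \<in> {1..n} \<rightarrow>\<^sub>E carrier H" and g: "g \<in> carrier G"
    using center_carrier[OF assms(1)] by auto
  have "h i \<otimes>\<^bsub>H\<^esub> b = b \<otimes>\<^bsub>H\<^esub> h i" if b: "b \<in> carrier H" for b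
    using center_commute(1)[OF assms(1), of "\<lambda>t\<in>{1..n}. b" "\<one>\<^bsub>G\<^esub>" i]
      b assms(2) sigma_in[OF g assms(2)] by (simp add: sigma_one)
  then show ?thesis using h assms(2) by (auto simp: group_center_def)
qed

lemma center_base_invariant:
  assumes "(h, g) \<in> group_center W" "x \<in> carrier G" "i \<in> {1..n}"
  shows "h (\<sigma> x i) = h i"
proof -
  have "h \<in> {1..n} \<rightarrow>\<^sub>E carrier H" using center_carrier[OF assms(1)] by auto
  then have "h i \<in> carrier H" "h (\<sigma> x i) \<in> carrier H"
    using assms(3) sigma_in[OF assms(2,3)] by auto
  then show ?thesis
    using center_commute(1)[OF assms(1), of "\<lambda>t\<in>{1..n}. \<one>\<^bsub>H\<^esub>" x i] assms
      sigma_in[OF center_carrier(2)[OF assms(1)] assms(3)] by simp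
qed

lemma center_base_constant:
  assumes "(h, g) \<in> group_center W" "\<sigma> ` carrier G = carrier (Sn n)" "i \<in> {1..n}"
  shows "h i = h 1"
proof -
  have one: "1 \<in> {1..n}" using assms(3) by simp
  have "transpose 1 i \<in> \<sigma> ` carrier G"
    using assms(2) permutes_swap_id[OF one assms(3)] by (simp add: Sn_def)
  then obtain x where x: "transpose 1 i = \<sigma> x" "x \<in> carrier G" by (rule imageE)
  show ?thesis using center_base_invariant[OF assms(1) x(2) one] x(1)[symmetric] by simp
qed

lemma center_top_central:
  assumes "(h, g) \<in> group_center W"
  shows "g \<in> group_center G"
proof -
  have "g \<otimes>\<^bsub>G\<^esub> x = x \<otimes>\<^bsub>G\<^esub> g" if "x \<in> carrier G" for x
    using center_commute(2)[OF assms, of "\<lambda>t\<in>{1..n}. \<one>\<^bsub>H\<^esub>" x] that by auto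
  then show ?thesis using center_carrier(2)[OF assms] by (simp add: group_center_def)
qed

lemma diag_top_in_center:
  assumes "a \<in> group_center H" "g \<in> group_center G" "\<sigma> g = id"
  shows "((\<lambda>i\<in>{1..n}. a), g) \<in> group_center W"
proof -
  have a: "a \<in> carrier H" "\<And>b. b \<in> carrier H \<Longrightarrow> a \<otimes>\<^bsub>H\<^esub> b = b \<otimes>\<^bsub>H\<^esub> a"
    and g: "g \<in> carrier G" "\<And>x. x \<in> carrier G \<Longrightarrow> g \<otimes>\<^bsub>G\<^esub> x = x \<otimes>\<^bsub>G\<^esub> g"
    using assms(1,2) by (auto simp: group_center_def)
  have "((\<lambda>i\<in>{1..n}. a), g) \<otimes>\<^bsub>W\<^esub> (k, x) = (k, x) \<otimes>\<^bsub>W\<^esub> ((\<lambda>i\<in>{1..n}. a), g)"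
    if k: "k \<in> {1..n} \<rightarrow>\<^sub>E carrier H" and x: "x \<in> carrier G" for k x
  proof -
    have "(\<lambda>i\<in>{1..n}. (\<lambda>i\<in>{1..n}. a) i \<otimes>\<^bsub>H\<^esub> k (\<sigma> g i))
        = (\<lambda>i\<in>{1..n}. k i \<otimes>\<^bsub>H\<^esub> (\<lambda>i\<in>{1..n}. a) (\<sigma> x i))"
      using k a(2) sigma_in[OF x] assms(3) by (intro restrict_ext) (auto simp: PiE_iff)
    then show ?thesis using g(2)[OF x] by simp
  qed
  then show ?thesis using a(1) g(1) by (auto simp: group_center_def)
qed

theorem group_center_wreath:
  assumes "carrier H \<noteq> {\<one>\<^bsub>H\<^esub>}" "\<sigma> ` carrier G = carrier (Sn n)" "n \<ge> 1"
  shows "group_center W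
    = {((\<lambda>i\<in>{1..n}. a), g) | a g. a \<in> group_center H \<and> g \<in> group_center G \<and> \<sigma> g = id}"
proof (intro equalityI subsetI)
  fix z assume z: "z \<in> group_center W"
  obtain h g where hg: "z = (h, g)" by fastforce
  with z have center: "(h, g) \<in> group_center W" by simp
  have "h = (\<lambda>i\<in>{1..n}. h 1)"
  proof
    fix i
    show "h i = (\<lambda>i\<in>{1..n}. h 1) i"
      using center_base_constant[OF center assms(2), of i] PiE_arb[OF center_carrier(1)[OF center], of i]
      by simp
  qed
  moreover have "h 1 \<in> group_center H" using center_base_central[OF center] assms(3) by simp
  ultimately show "z \<in> {((\<lambda>i\<in>{1..n}. a), g) | a g. a \<in> group_center H \<and> g \<in> group_center G \<and> \<sigma> g = id}"
    using hg center_top_central[OF center] center_top_in_kernel[OF center assms(1)] by blast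
qed (blast intro: diag_top_in_center)

lemma diag_emb_set_mult_top_emb:
  assumes "A \<subseteq> carrier H" "B \<subseteq> carrier G"
  shows "(diag_emb H G n ` A) <#>\<^bsub>W\<^esub> (top_emb H n ` B) = {((\<lambda>i\<in>{1..n}. a), g) | a g. a \<in> A \<and> g \<in> B}"
  using assms by (force simp: set_mult_def diag_emb_mult_top_emb)

end

theorem theorem3p3:
  fixes G :: "('g, 'y) monoid_scheme" and H :: "('h, 'x) monoid_scheme"
    and \<sigma> :: "'g \<Rightarrow> nat \<Rightarrow> nat" and n :: nat
  assumes "n \<ge> 2"
    and "group G" and "group H"
    and "carrier G \<noteq> {\<one>\<^bsub>G\<^esub>}" and "carrier H \<noteq> {\<one>\<^bsub>H\<^esub>}"
    and "\<sigma> \<in> hom G (Sn n)" and "\<sigma> ` carrier G = carrier (Sn n)"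
  shows "(group_center (wreath H G n \<sigma>)
           = (diag_emb H G n ` group_center H)
               <#>\<^bsub>wreath H G n \<sigma>\<^esub> (top_emb H n ` (group_center G \<inter> kernel G (Sn n) \<sigma>)))
         \<and> (group_center G \<subseteq> kernel G (Sn n) \<sigma> \<longrightarrow>
         group_center (wreath H G n \<sigma>)
           = (diag_emb H G n ` group_center H)
               <#>\<^bsub>wreath H G n \<sigma>\<^esub> (top_emb H n ` group_center G))"
proof -
  interpret wreath_product G H n \<sigma>
    by (intro wreath_product.intro wreath_product_axioms.intro assms(2,3,6))
  have ZH: "group_center H \<subseteq> carrier H" and ZG: "group_center G \<subseteq> carrier G"
    by (auto simp: group_center_def)
  have "group_center W
      = {((\<lambda>i\<in>{1..n}. a), g) | a g. a \<in> group_center H \<and> g \<in> group_center G \<and> \<sigma> g = id}"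
    using assms(1) by (intro group_center_wreath assms(5,7)) simp
  also have "\<dots> = (diag_emb H G n ` group_center H)
      <#>\<^bsub>W\<^esub> (top_emb H n ` (group_center G \<inter> kernel G (Sn n) \<sigma>))"
    using ZG by (subst diag_emb_set_mult_top_emb[OF ZH]) (auto simp: kernel_Sn)
  finally show ?thesis by (simp add: Int_absorb2)
qed

end
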